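(* Let $k \ge 1$. If $M$ is a simple matroid and $X \subseteq E(M)$, then every $k$-pseudoclaw of $M / X$ is a $k$-claw of $M$.
   Context: A claw of a matroid $N$ is a set that is both a flat and an independent set of $N$; a $k$-claw is a claw of size $k$. A simplification of a matroid $N$ is any matroid obtained from $N$ by deleting all loops and all but one element from each parallel class. A set $F$ is a $k$-pseudoclaw of $N$ if $F$ is a $k$-claw of some simplification of $N$. *)

theory Defs
  imports Main
begin

definition matroid :: "'a set \<Rightarrow> ('a set \<Rightarrow> bool) \<Rightarrow> bool" where
  "matroid E indep \<longleftrightarrow> finite E \<and> indep {} \<and> (\<forall>I. indep I \<longrightarrow> I \<subseteq> E)
     \<and> (\<forall>I J. indep J \<and> I \<subseteq> J \<longrightarrow> indep I)
     \<and> (\<forall>I J. indep I \<and> indep J \<and> card I < card J \<longrightarrow> (\<exists>e\<in>J - I. indep (insert e I)))"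

definition rank :: "('a set \<Rightarrow> bool) \<Rightarrow> 'a set \<Rightarrow> nat" where
  "rank indep A = Max {card I | I. I \<subseteq> A \<and> indep I}"

definition closure :: "'a set \<Rightarrow> ('a set \<Rightarrow> bool) \<Rightarrow> 'a set \<Rightarrow> 'a set" where
  "closure E indep A = {e \<in> E. rank indep (insert e A) = rank indep A}"

definition flat :: "'a set \<Rightarrow> ('a set \<Rightarrow> bool) \<Rightarrow> 'a set \<Rightarrow> bool" where
  "flat E indep F \<longleftrightarrow> F \<subseteq> E \<and> closure E indep F = F"

definition claw :: "'a set \<Rightarrow> ('a set \<Rightarrow> bool) \<Rightarrow> nat \<Rightarrow> 'a set \<Rightarrow> bool" where
  "claw E indep k F \<longleftrightarrow> indep F \<and> flat E indep F \<and> card F = k"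

definition contract_ground :: "'a set \<Rightarrow> 'a set \<Rightarrow> 'a set" where
  "contract_ground E X = E - X"

definition contract_indep :: "'a set \<Rightarrow> ('a set \<Rightarrow> bool) \<Rightarrow> 'a set \<Rightarrow> 'a set \<Rightarrow> bool" where
  "contract_indep E indep X I \<longleftrightarrow>
     I \<subseteq> E - X \<and> rank indep (I \<union> X) = card I + rank indep X"

definition restrict_indep :: "('a set \<Rightarrow> bool) \<Rightarrow> 'a set \<Rightarrow> 'a set \<Rightarrow> bool" where
  "restrict_indep indep S I \<longleftrightarrow> indep I \<and> I \<subseteq> S"

definition is_loop :: "'a set \<Rightarrow> ('a set \<Rightarrow> bool) \<Rightarrow> 'a \<Rightarrow> bool" where
  "is_loop E indep e \<longleftrightarrow> e \<in> E \<and> \<not> indep {e}"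

definition parallel :: "'a set \<Rightarrow> ('a set \<Rightarrow> bool) \<Rightarrow> 'a \<Rightarrow> 'a \<Rightarrow> bool" where
  "parallel E indep e f \<longleftrightarrow> e \<in> E \<and> f \<in> E \<and> e \<noteq> f \<and> indep {e} \<and> indep {f} \<and> \<not> indep {e, f}"

definition simple :: "'a set \<Rightarrow> ('a set \<Rightarrow> bool) \<Rightarrow> bool" where
  "simple E indep \<longleftrightarrow> (\<forall>e\<in>E. \<not> is_loop E indep e) \<and> (\<forall>e f. \<not> parallel E indep e f)"

definition simplification_set :: "'a set \<Rightarrow> ('a set \<Rightarrow> bool) \<Rightarrow> 'a set \<Rightarrow> bool" where
  "simplification_set E indep S \<longleftrightarrow> S \<subseteq> E \<and> (\<forall>s\<in>S. \<not> is_loop E indep s)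
     \<and> (\<forall>e\<in>E. \<not> is_loop E indep e \<longrightarrow> (\<exists>!s. s \<in> S \<and> (s = e \<or> parallel E indep e s)))"

definition pseudoclaw :: "'a set \<Rightarrow> ('a set \<Rightarrow> bool) \<Rightarrow> nat \<Rightarrow> 'a set \<Rightarrow> bool" where
  "pseudoclaw E indep k F \<longleftrightarrow>
     (\<exists>S. simplification_set E indep S \<and> claw S (restrict_indep indep S) k F)"

end

theory Submission
  imports Defs
begin

text \<open>Write r for the rank of M.  Independence of F in M / X means r (F \<union> X) = |F| + r X,
  so F is independent in M and skew to X.  Skewness gives, for Z \<subseteq> F, that an element spanned
  both by F and by X \<union> Z is spanned by Z; in a simple matroid sets of size at most one are flats,
  so such an element lies in Z.  Now let e \<in> cl F.  Taking Z = {} shows that e is not spanned by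
  X, so e is a non-loop of M / X and has a representative s in the simplification, with e and s
  spanning each other modulo X.  If s \<in> F, taking Z = {s} gives e = s \<in> F.  Otherwise s is spanned
  by F \<union> X, i.e. s lies in the closure of F in M / X, contradicting that F is a flat of the
  simplification.\<close>

lemma rank_restrict_indep: "A \<subseteq> S \<Longrightarrow> rank (restrict_indep P S) A = rank P A"
  unfolding rank_def restrict_indep_def by (metis order_trans)

lemma parallel_sym: "parallel E P e f \<Longrightarrow> parallel E P f e"
  unfolding parallel_def by (auto simp: insert_commute)

locale finite_set_system =
  fixes E :: "'a set" and P :: "'a set \<Rightarrow> bool"
  assumes finite_ground: "finite E"
    and indep_subset_ground: "P I \<Longrightarrow> I \<subseteq> E"
    and indep_empty: "P {}"
begin

lemma finite_indep: "P I \<Longrightarrow> finite I"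
  using finite_ground indep_subset_ground finite_subset by blast

lemma finite_rank_values: "finite {card I | I. I \<subseteq> A \<and> P I}"
proof -
  have "{card I | I. I \<subseteq> A \<and> P I} \<subseteq> card ` Pow E"
    using indep_subset_ground by auto
  then show ?thesis
    using finite_ground finite_subset by blast
qed

lemma rank_ge_card: "I \<subseteq> A \<Longrightarrow> P I \<Longrightarrow> card I \<le> rank P A"
  unfolding rank_def using finite_rank_values by (intro Max_ge) auto

lemma rank_attained:
  obtains I where "I \<subseteq> A" "P I" "card I = rank P A"
proof -
  have "{card I | I. I \<subseteq> A \<and> P I} \<noteq> {}"
    using indep_empty by auto
  from Max_in[OF finite_rank_values this] show ?thesis
    using that unfolding rank_def by auto
qed

lemma rank_le_card: "finite A \<Longrightarrow> rank P A \<le> card A"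
  by (metis rank_attained card_mono)

lemma rank_mono: "A \<subseteq> B \<Longrightarrow> rank P A \<le> rank P B"
  by (metis rank_attained rank_ge_card order_trans)

lemma rank_of_indep: "P I \<Longrightarrow> rank P I = card I"
  using rank_le_card rank_ge_card finite_indep by (meson antisym order_refl)

lemma indep_if_card_le_rank:
  assumes "finite A" "card A \<le> rank P A"
  shows "P A"
proof -
  obtain I where "I \<subseteq> A" "P I" "card I = rank P A"
    by (rule rank_attained)
  with assms have "I = A"
    by (metis card_seteq)
  with \<open>P I\<close> show ?thesis
    by simp
qed

lemma rank_insert_dependent:
  assumes "P F" "\<not> P (insert s F)"
  shows "rank P (insert s F) = card F"
proof -
  have "finite F" "s \<notin> F"
    using assms finite_indep by (auto simp: insert_absorb)
  then have card_insert: "card (insert s F) = Suc (card F)"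
    by simp
  have "rank P (insert s F) \<noteq> card (insert s F)"
    using assms(2) indep_if_card_le_rank \<open>finite F\<close> by fastforce
  moreover have "rank P (insert s F) \<le> card (insert s F)"
    using rank_le_card \<open>finite F\<close> by simp
  moreover have "card F \<le> rank P (insert s F)"
    using rank_ge_card[of F "insert s F"] assms(1) by blast
  ultimately show ?thesis
    unfolding card_insert by linarith
qed

lemma subset_closure: "A \<subseteq> E \<Longrightarrow> A \<subseteq> closure E P A"
  unfolding closure_def by (auto simp: insert_absorb)

lemma mem_closure_insert: "e \<in> E \<Longrightarrow> e \<in> closure E P (insert e A)"
  unfolding closure_def by simp

lemma closure_absorb:
  assumes "e \<in> closure E P A" "f \<in> closure E P (insert e A)"
  shows "f \<in> closure E P A"
proof -
  have "rank P (insert f A) \<le> rank P (insert f (insert e A))"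
    by (rule rank_mono) auto
  also have "\<dots> = rank P A"
    using assms unfolding closure_def by simp
  finally have "rank P (insert f A) \<le> rank P A" .
  with assms(2) rank_mono[OF subset_insertI, of A f] show ?thesis
    unfolding closure_def by simp
qed

lemma insert_indep_if_flat_restrict:
  assumes "flat S (restrict_indep P S) F" "P F" "s \<in> S - F"
  shows "P (insert s F)"
proof (rule ccontr)
  assume dependent: "\<not> P (insert s F)"
  have "F \<subseteq> S"
    using assms(1) unfolding flat_def by simp
  then have "rank (restrict_indep P S) (insert s F) = rank (restrict_indep P S) F"
    using assms(3) rank_insert_dependent[OF assms(2) dependent] rank_of_indep[OF assms(2)]
    by (simp add: rank_restrict_indep)
  then have "s \<in> closure S (restrict_indep P S) F"
    using assms(3) unfolding closure_def by simp
  then show False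
    using assms(1,3) unfolding flat_def by simp
qed

end

locale finite_matroid =
  fixes E :: "'a set" and indep :: "'a set \<Rightarrow> bool"
  assumes matroid: "matroid E indep"

sublocale finite_matroid \<subseteq> finite_set_system E indep
  using matroid unfolding matroid_def by unfold_locales auto

context finite_matroid
begin

lemma indep_subset: "indep J \<Longrightarrow> I \<subseteq> J \<Longrightarrow> indep I"
  using matroid unfolding matroid_def by blast

lemma indep_augment: "indep I \<Longrightarrow> indep J \<Longrightarrow> card I < card J \<Longrightarrow> \<exists>e\<in>J - I. indep (insert e I)"
  using matroid unfolding matroid_def by blast

lemma exists_basis_extension:
  "indep I \<Longrightarrow> I \<subseteq> A \<Longrightarrow> \<exists>J. I \<subseteq> J \<and> J \<subseteq> A \<and> indep J \<and> card J = rank indep A"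
proof (induction "rank indep A - card I" arbitrary: I rule: less_induct)
  case less
  show ?case
  proof (cases "card I = rank indep A")
    case True
    with less.prems show ?thesis
      by blast
  next
    case False
    with rank_ge_card[OF less.prems(2,1)] have smaller: "card I < rank indep A"
      by simp
    obtain B where B: "B \<subseteq> A" "indep B" "card B = rank indep A"
      by (rule rank_attained)
    with smaller obtain e where e: "e \<in> B - I" "indep (insert e I)"
      using indep_augment[OF less.prems(1) B(2)] by auto
    have "card (insert e I) = Suc (card I)"
      using e(1) finite_indep[OF less.prems(1)] by simp
    with smaller have "rank indep A - card (insert e I) < rank indep A - card I"
      by simp
    with less.hyps e B(1) less.prems(2) show ?thesis
      by (metis Diff_iff insert_subset subset_iff subset_insertI)
  qed
qed

lemma rank_submod: "rank indep (A \<union> B) + rank indep (A \<inter> B) \<le> rank indep A + rank indep B"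
proof -
  obtain I where I: "I \<subseteq> A \<inter> B" "indep I" "card I = rank indep (A \<inter> B)"
    by (rule rank_attained)
  then obtain J where J: "I \<subseteq> J" "J \<subseteq> A \<union> B" "indep J" "card J = rank indep (A \<union> B)"
    using exists_basis_extension[of I "A \<union> B"] by auto
  have "finite J"
    using J(3) finite_indep by blast
  have "card (J \<inter> A) \<le> rank indep A" "card (J \<inter> B) \<le> rank indep B"
    using rank_ge_card indep_subset[OF J(3)] by auto
  moreover have "card I \<le> card (J \<inter> A \<inter> B)"
    using I J \<open>finite J\<close> by (intro card_mono) auto
  moreover have "card J + card (J \<inter> A \<inter> B) = card (J \<inter> A) + card (J \<inter> B)"
  proof -
    have "J \<inter> A \<union> J \<inter> B = J" "J \<inter> A \<inter> (J \<inter> B) = J \<inter> A \<inter> B"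
      using J(2) by auto
    then show ?thesis
      using card_Un_Int[of "J \<inter> A" "J \<inter> B"] \<open>finite J\<close> by simp
  qed
  ultimately show ?thesis
    using I(3) J(4) by linarith
qed

lemma rank_Un_le: "rank indep (A \<union> B) \<le> rank indep A + rank indep B"
  using rank_submod[of A B] by linarith

lemma rank_insert_le: "rank indep (insert e A) \<le> rank indep A + 1"
  using rank_Un_le[of "{e}" A] rank_le_card[of "{e}"] by simp

lemma closure_mono:
  assumes "A \<subseteq> B"
  shows "closure E indep A \<subseteq> closure E indep B"
proof
  fix e
  assume e: "e \<in> closure E indep A"
  have "rank indep (insert e B) + rank indep A \<le> rank indep (insert e B) + rank indep (insert e A \<inter> B)"
    using assms by (intro add_left_mono rank_mono) auto
  also have "\<dots> \<le> rank indep (insert e A) + rank indep B"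
    using rank_submod[of "insert e A" B] assms by (simp add: sup.absorb2)
  finally have "rank indep (insert e B) \<le> rank indep B"
    using e unfolding closure_def by simp
  with e rank_mono[OF subset_insertI, of B e] show "e \<in> closure E indep B"
    unfolding closure_def by simp
qed

lemma closure_inter_skew:
  assumes skew: "rank indep (F \<union> X) = rank indep F + rank indep X"
    and "Z \<subseteq> F" "e \<in> closure E indep F" "e \<in> closure E indep (X \<union> Z)"
  shows "e \<in> closure E indep Z"
proof -
  let ?A = "insert e F" and ?B = "insert e (X \<union> Z)"
  have "rank indep (F \<union> X) + rank indep (insert e Z) \<le> rank indep (?A \<union> ?B) + rank indep (?A \<inter> ?B)"
    using assms(2) by (intro add_mono rank_mono) auto
  also have "\<dots> \<le> rank indep ?A + rank indep ?B"
    by (rule rank_submod)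
  also have "\<dots> \<le> rank indep F + rank indep X + rank indep Z"
    using assms(3,4) rank_Un_le[of X Z] unfolding closure_def by simp
  finally have "rank indep (insert e Z) \<le> rank indep Z"
    using skew by simp
  with assms(3) rank_mono[OF subset_insertI, of Z e] show ?thesis
    unfolding closure_def by simp
qed

lemma indep_if_simple_card_le_2:
  assumes "simple E indep" "I \<subseteq> E" "card I \<le> 2"
  shows "indep I"
proof -
  have "finite I"
    using assms(2) finite_ground finite_subset by blast
  with assms(3) consider "I = {}" | e where "I = {e}" | e f where "I = {e, f}" "e \<noteq> f"
    by (metis card_0_eq card_1_singleton_iff card_2_iff le_Suc_eq numeral_2_eq_2 le_zero_eq)
  then show ?thesis
  proof cases
    case 1
    then show ?thesis
      using indep_empty by simp
  next
    case 2
    then show ?thesis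
      using assms(1,2) unfolding simple_def is_loop_def by auto
  next
    case 3
    then show ?thesis
      using assms(1,2) unfolding simple_def is_loop_def parallel_def by blast
  qed
qed

lemma closure_eq_if_simple_card_le_1:
  assumes "simple E indep" "Z \<subseteq> E" "card Z \<le> 1"
  shows "closure E indep Z = Z"
proof
  show "Z \<subseteq> closure E indep Z"
    using assms(2) by (rule subset_closure)
  show "closure E indep Z \<subseteq> Z"
  proof
    fix e
    assume e: "e \<in> closure E indep Z"
    show "e \<in> Z"
    proof (rule ccontr)
      assume "e \<notin> Z"
      have "finite Z"
        using assms(2) finite_ground finite_subset by blast
      with \<open>e \<notin> Z\<close> have card_insert: "card (insert e Z) = Suc (card Z)"
        by simp
      with e assms have "indep (insert e Z)" "indep Z"
        using indep_if_simple_card_le_2 unfolding closure_def by auto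
      with e card_insert show False
        unfolding closure_def by (simp add: rank_of_indep)
    qed
  qed
qed

lemma contract_set_system: "finite_set_system (E - X) (contract_indep E indep X)"
  using finite_ground by unfold_locales (auto simp: contract_indep_def)

lemma contract_indep_imp_indep:
  assumes "contract_indep E indep X F"
  shows "indep F"
proof -
  have "finite F" "rank indep (F \<union> X) = card F + rank indep X"
    using assms finite_ground finite_subset unfolding contract_indep_def by auto
  with rank_Un_le[of F X] show ?thesis
    by (simp add: indep_if_card_le_rank)
qed

lemma contract_indep_insert_iff:
  assumes "contract_indep E indep X F" "s \<notin> F"
  shows "contract_indep E indep X (insert s F) \<longleftrightarrow> s \<in> E - closure E indep (F \<union> X)"
proof -
  have F: "F \<subseteq> E - X" "rank indep (F \<union> X) = card F + rank indep X"
    using assms(1) unfolding contract_indep_def by auto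
  have card_insert: "card (insert s F) = Suc (card F)"
    using assms(2) contract_indep_imp_indep[OF assms(1)] finite_indep by simp
  have "contract_indep E indep X (insert s F) \<longleftrightarrow>
      s \<in> E - X \<and> rank indep (insert s (F \<union> X)) = rank indep (F \<union> X) + 1"
    unfolding contract_indep_def card_insert using F by auto
  also have "\<dots> \<longleftrightarrow> s \<in> E - closure E indep (F \<union> X)"
    using rank_insert_le[of s "F \<union> X"] rank_mono[OF subset_insertI, of "F \<union> X" s]
    unfolding closure_def by (auto simp: insert_absorb)
  finally show ?thesis .
qed

lemma parallel_contract_imp_closure:
  assumes "parallel (E - X) (contract_indep E indep X) e s"
  shows "s \<in> closure E indep (insert e X)"
proof -
  have "contract_indep E indep X {e}" "\<not> contract_indep E indep X (insert s {e})" "s \<in> E" "s \<noteq> e"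
    using assms unfolding parallel_def by (auto simp: insert_commute)
  then show ?thesis
    using contract_indep_insert_iff[of X "{e}" s] by auto
qed

lemma flat_if_flat_in_contract_simplification:
  assumes "simple E indep"
    and "simplification_set (E - X) (contract_indep E indep X) S"
    and "contract_indep E indep X F"
    and "flat S (restrict_indep (contract_indep E indep X) S) F"
  shows "flat E indep F"
proof -
  interpret contraction: finite_set_system "E - X" "contract_indep E indep X"
    by (rule contract_set_system)
  have "F \<subseteq> E"
    using assms(3) unfolding contract_indep_def by auto
  have skew: "rank indep (F \<union> X) = rank indep F + rank indep X"
    using assms(3) rank_of_indep[OF contract_indep_imp_indep[OF assms(3)]]
    unfolding contract_indep_def by simp
  have "closure E indep F \<subseteq> F"
  proof
    fix e
    assume e: "e \<in> closure E indep F"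
    then have "e \<in> E"
      unfolding closure_def by simp
    have "e \<notin> closure E indep X"
    proof
      assume "e \<in> closure E indep X"
      then have "e \<in> closure E indep {}"
        using closure_inter_skew[OF skew empty_subsetI e] by simp
      then show False
        using closure_eq_if_simple_card_le_1[OF assms(1)] by simp
    qed
    with \<open>e \<in> E\<close> have "contract_indep E indep X {e}"
      using contract_indep_insert_iff[OF contraction.indep_empty, of e] by simp
    then have "e \<in> E - X" "\<not> is_loop (E - X) (contract_indep E indep X) e"
      unfolding contract_indep_def is_loop_def by auto
    then obtain s where s: "s \<in> S" "s = e \<or> parallel (E - X) (contract_indep E indep X) e s"
      using assms(2) unfolding simplification_set_def by metis
    have "s \<in> E"
      using s(1) assms(2) unfolding simplification_set_def by auto
    have "e \<in> closure E indep (insert s X) \<and> s \<in> closure E indep (insert e X)"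
    proof (cases "s = e")
      case True
      with \<open>e \<in> E\<close> show ?thesis
        by (simp add: mem_closure_insert)
    next
      case False
      with s(2) have "parallel (E - X) (contract_indep E indep X) e s"
        by simp
      then show ?thesis
        by (simp add: parallel_contract_imp_closure parallel_sym)
    qed
    then have e_s: "e \<in> closure E indep (insert s X)" and s_e: "s \<in> closure E indep (insert e X)"
      by auto
    show "e \<in> F"
    proof (cases "s \<in> F")
      case True
      with e e_s have "e \<in> closure E indep {s}"
        using closure_inter_skew[OF skew, of "{s}" e] by simp
      with True \<open>s \<in> E\<close> show ?thesis
        using closure_eq_if_simple_card_le_1[OF assms(1), of "{s}"] by simp
    next
      case False
      with s(1) have "contract_indep E indep X (insert s F)"
        using contraction.insert_indep_if_flat_restrict[OF assms(4,3)] by blast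
      then have "s \<notin> closure E indep (F \<union> X)"
        using contract_indep_insert_iff[OF assms(3) False] by blast
      moreover have "s \<in> closure E indep (F \<union> X)"
      proof (rule closure_absorb)
        show "e \<in> closure E indep (F \<union> X)"
          using e closure_mono[of F "F \<union> X"] by auto
        show "s \<in> closure E indep (insert e (F \<union> X))"
          using s_e closure_mono[of "insert e X" "insert e (F \<union> X)"] by auto
      qed
      ultimately show ?thesis
        by contradiction
    qed
  qed
  with \<open>F \<subseteq> E\<close> show ?thesis
    unfolding flat_def using subset_closure by blast
qed

end

theorem lemma2p1:
  fixes E X F :: "'a set" and indep :: "'a set \<Rightarrow> bool" and k :: nat
  assumes "k \<ge> 1"
    and "matroid E indep"
    and "simple E indep"
    and "X \<subseteq> E"
    and "pseudoclaw (contract_ground E X) (contract_indep E indep X) k F"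
  shows "claw E indep k F"
proof -
  interpret finite_matroid E indep
    by (rule finite_matroid.intro) (rule assms(2))
  obtain S where S: "simplification_set (E - X) (contract_indep E indep X) S"
    and claw: "claw S (restrict_indep (contract_indep E indep X) S) k F"
    using assms(5) unfolding pseudoclaw_def contract_ground_def by blast
  then have "contract_indep E indep X F" "flat S (restrict_indep (contract_indep E indep X) S) F"
    "card F = k"
    unfolding claw_def restrict_indep_def by auto
  then show ?thesis
    unfolding claw_def
    using flat_if_flat_in_contract_simplification[OF assms(3) S] contract_indep_imp_indep by blast
qed

end
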